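(* In the bilevel setting of the context, suppose (A2) and (A4) hold. Then the GMFCQ holds at $x^*$ for $\Omega_1$ if and only if the GMFCQ holds for $\Omega_2$ at $(x^*,y^*,\mu^*,\xi^* )$.
   Context: Lower-level problem $(P_x)$: $\min_yf(x,y)$ s.t. $h(x,y)=0$, $g(x,y)\le0$; upper-level constraints $H(x,y)=0\in\mathbb{R}^p$, $G(x,y)\le0\in\mathbb{R}^q$, upper objective $F$; $(x,y)\in\mathbb{R}^n\times\mathbb{R}^m$, $h\to\mathbb{R}^r$, $g\to\mathbb{R}^s$; $f,g,h\in C^3$, $F,G,H\in C^2$ around $(x^*,y^* )$. $\mathcal{L}(x;y,\mu,\xi)=f+\mu^Th+\xi^Tg$; $(\mu^*,\xi^* )$ satisfies $\nabla_y\mathcal{L}(x^*;y^*,\mu^*,\xi^* )=0$, $h(x^*,y^* )=0$, $0\le\xi^*\perp g(x^*,y^* )\le0$. $I_G=\{i:G_i(x^*,y^* )=0\}$. (A2) SSOSC: for every such KKT multiplier, $d_y^T\nabla^2_{yy}\mathcal{L}(x^*;y^*,\mu^*,\xi^* )d_y>0$ for all $d_y\ne0$ with $\mathcal{J}_yh(x^*,y^* )d_y=0$ and $\nabla_yg_i(x^*,y^* )^Td_y=0$ whenever $g_i(x^*,y^* )=0,\xi^*_i>0$. (A4) LICQ: $\{\nabla_yh_i(x^*,y^* )\}_{i\in[r]}\cup\{\nabla_yg_i(x^*,y^* ):g_i(x^*,y^* )=0\}$ linearly independent. Under (A2),(A4) there are locally Lipschitz $(y(x),\mu(x),\xi(x))$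 near $x^*$, equal to $(y^*,\mu^*,\xi^* )$ at $x^*$, locally uniquely solving the KKT system of $(P_x)$. $\Omega_1=\{x:H(x,y(x))=0,G(x,y(x))\le0\}$; $\Omega_2=\{(x,y,\mu,\xi):H(x,y)=0,G(x,y)\le0,\nabla_y\mathcal{L}(x;y,\mu,\xi)=0,h(x,y)=0,g(x,y)-\Pi_{\mathbb{R}^s_-}(g(x,y)+\xi)=0\}$ with $\Pi_{\mathbb{R}^s_-}(z)_i=\min\{0,z_i\}$. $\partial\Pi_{\mathbb{R}^s_-}(z)$ (Clarke Jacobian) = diagonal $W=\mathrm{diag}(w)$ with $w_i=1$ if $z_i<0$, $0$ if $z_i>0$, $w_i\in[0,1]$ if $z_i=0$. All derivatives below at $(x^*,y^*,\mu^*,\xi^* )$. For such $W$: $\mathcal{A}(W)=\begin{pmatrix}\nabla^2_{yy}\mathcal{L}&\mathcal{J}_yh^T&\mathcal{J}_yg^T\\ \mathcal{J}_yh&0&0\\(I-W)\mathcal{J}_yg&0&-W\end{pmatrix}$ (invertible under (A2),(A4)), $\mathcal{H}(W)=\mathcal{A}(W)^{-1}\begin{pmatrix}\nabla^2_{yx}\mathcal{L}\\ \mathcal{J}_xh\\(I-W)\mathcal{J}_xg\end{pmatrix}$. GMFCQ for $\Omega_1$ at $x^*$: for every $W\in\partial\Pi_{\mathbb{R}^s_-}(g(x^*,y^* )+\xi^* )$, $M:=\mathcal{J}_xH-\mathcal{J}_yH[I_m\ 0\ 0]\mathcal{H}(W)$ has full row rank and there is $d_x$ with $Md_x=0$ and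 $(\nabla_xG_i^T-\nabla_yG_i^T[I_m\ 0\ 0]\mathcal{H}(W))d_x<0$ for $i\in I_G$. GMFCQ for $\Omega_2$ at $(x^*,y^*,\mu^*,\xi^* )$: for every such $W$, $A=\begin{pmatrix}\mathcal{J}_xH&\mathcal{J}_yH&0&0\\ \nabla^2_{yx}\mathcal{L}&\nabla^2_{yy}\mathcal{L}&\mathcal{J}_yh^T&\mathcal{J}_yg^T\\ \mathcal{J}_xh&\mathcal{J}_yh&0&0\\(I-W)\mathcal{J}_xg&(I-W)\mathcal{J}_yg&0&-W\end{pmatrix}$ has full row rank and there is $d=(d_x,d_y,d_\mu,d_\xi)\in\ker A$ with $\nabla_xG_i^Td_x+\nabla_yG_i^Td_y<0$ for $i\in I_G$. *)

theory Defs
  imports "HOL-Analysis.Analysis"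
begin

definition C1_on :: "'a::real_normed_vector set \<Rightarrow> ('a \<Rightarrow> 'b::real_normed_vector) \<Rightarrow> bool" where
  "C1_on U \<phi> \<longleftrightarrow> (\<exists>D. continuous_on U D \<and> (\<forall>z\<in>U. (\<phi> has_derivative blinfun_apply (D z)) (at z)))"

definition C2_on :: "'a::real_normed_vector set \<Rightarrow> ('a \<Rightarrow> 'b::real_normed_vector) \<Rightarrow> bool" where
  "C2_on U \<phi> \<longleftrightarrow> (\<exists>D. C1_on U D \<and> (\<forall>z\<in>U. (\<phi> has_derivative blinfun_apply (D z)) (at z)))"

definition C3_on :: "'a::real_normed_vector set \<Rightarrow> ('a \<Rightarrow> 'b::real_normed_vector) \<Rightarrow> bool" where
  "C3_on U \<phi> \<longleftrightarrow> (\<exists>D. C2_on U D \<and> (\<forall>z\<in>U. (\<phi> has_derivative blinfun_apply (D z)) (at z)))"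

definition gradx :: "('x::euclidean_space \<times> 'y::euclidean_space \<Rightarrow> real) \<Rightarrow> 'x \<times> 'y \<Rightarrow> 'x" where
  "gradx \<phi> z = (\<Sum>b\<in>Basis. frechet_derivative \<phi> (at z) (b, 0) *\<^sub>R b)"

definition grady :: "('x::euclidean_space \<times> 'y::euclidean_space \<Rightarrow> real) \<Rightarrow> 'x \<times> 'y \<Rightarrow> 'y" where
  "grady \<phi> z = (\<Sum>b\<in>Basis. frechet_derivative \<phi> (at z) (0, b) *\<^sub>R b)"

definition Lag :: "('x \<times> 'y \<Rightarrow> real) \<Rightarrow> (nat \<Rightarrow> 'x \<times> 'y \<Rightarrow> real) \<Rightarrow> (nat \<Rightarrow> 'x \<times> 'y \<Rightarrow> real)
    \<Rightarrow> nat \<Rightarrow> nat \<Rightarrow> (nat \<Rightarrow> real) \<Rightarrow> (nat \<Rightarrow> real) \<Rightarrow> 'x \<times> 'y \<Rightarrow> real" where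
  "Lag f h g r s \<mu> \<xi> z = f z + (\<Sum>i<r. \<mu> i * h i z) + (\<Sum>i<s. \<xi> i * g i z)"

definition Hyy :: "('x::euclidean_space \<times> 'y::euclidean_space \<Rightarrow> real) \<Rightarrow> (nat \<Rightarrow> 'x \<times> 'y \<Rightarrow> real)
    \<Rightarrow> (nat \<Rightarrow> 'x \<times> 'y \<Rightarrow> real) \<Rightarrow> nat \<Rightarrow> nat \<Rightarrow> (nat \<Rightarrow> real) \<Rightarrow> (nat \<Rightarrow> real) \<Rightarrow> 'x \<times> 'y \<Rightarrow> 'y \<Rightarrow> 'y" where
  "Hyy f h g r s \<mu> \<xi> z dy = frechet_derivative (grady (Lag f h g r s \<mu> \<xi>)) (at z) (0, dy)"

definition Hyx :: "('x::euclidean_space \<times> 'y::euclidean_space \<Rightarrow> real) \<Rightarrow> (nat \<Rightarrow> 'x \<times> 'y \<Rightarrow> real)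
    \<Rightarrow> (nat \<Rightarrow> 'x \<times> 'y \<Rightarrow> real) \<Rightarrow> nat \<Rightarrow> nat \<Rightarrow> (nat \<Rightarrow> real) \<Rightarrow> (nat \<Rightarrow> real) \<Rightarrow> 'x \<times> 'y \<Rightarrow> 'x \<Rightarrow> 'y" where
  "Hyx f h g r s \<mu> \<xi> z dx = frechet_derivative (grady (Lag f h g r s \<mu> \<xi>)) (at z) (dx, 0)"

definition lower_KKT :: "('x::euclidean_space \<times> 'y::euclidean_space \<Rightarrow> real) \<Rightarrow> (nat \<Rightarrow> 'x \<times> 'y \<Rightarrow> real)
    \<Rightarrow> (nat \<Rightarrow> 'x \<times> 'y \<Rightarrow> real) \<Rightarrow> nat \<Rightarrow> nat \<Rightarrow> 'x \<times> 'y \<Rightarrow> (nat \<Rightarrow> real) \<Rightarrow> (nat \<Rightarrow> real) \<Rightarrow> bool" where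
  "lower_KKT f h g r s z \<mu> \<xi> \<longleftrightarrow>
     grady (Lag f h g r s \<mu> \<xi>) z = 0 \<and> (\<forall>i<r. h i z = 0) \<and>
     (\<forall>i<s. 0 \<le> \<xi> i \<and> g i z \<le> 0 \<and> \<xi> i * g i z = 0)"

definition SSOSC :: "('x::euclidean_space \<times> 'y::euclidean_space \<Rightarrow> real) \<Rightarrow> (nat \<Rightarrow> 'x \<times> 'y \<Rightarrow> real)
    \<Rightarrow> (nat \<Rightarrow> 'x \<times> 'y \<Rightarrow> real) \<Rightarrow> nat \<Rightarrow> nat \<Rightarrow> 'x \<times> 'y \<Rightarrow> bool" where
  "SSOSC f h g r s z \<longleftrightarrow>
     (\<forall>\<mu> \<xi>. lower_KKT f h g r s z \<mu> \<xi> \<longrightarrow>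
        (\<forall>dy. dy \<noteq> 0 \<and> (\<forall>i<r. grady (h i) z \<bullet> dy = 0) \<and>
              (\<forall>i<s. g i z = 0 \<and> \<xi> i > 0 \<longrightarrow> grady (g i) z \<bullet> dy = 0)
           \<longrightarrow> dy \<bullet> Hyy f h g r s \<mu> \<xi> z dy > 0))"

definition LICQ :: "(nat \<Rightarrow> 'x::euclidean_space \<times> 'y::euclidean_space \<Rightarrow> real)
    \<Rightarrow> (nat \<Rightarrow> 'x \<times> 'y \<Rightarrow> real) \<Rightarrow> nat \<Rightarrow> nat \<Rightarrow> 'x \<times> 'y \<Rightarrow> bool" where
  "LICQ h g r s z \<longleftrightarrow>
     (\<forall>a b. (\<Sum>i<r. a i *\<^sub>R grady (h i) z) + (\<Sum>i\<in>{i. i < s \<and> g i z = 0}. b i *\<^sub>R grady (g i) z) = 0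
        \<longrightarrow> (\<forall>i<r. a i = 0) \<and> (\<forall>i<s. g i z = 0 \<longrightarrow> b i = 0))"

text \<open>W = diag(w) belongs to the Clarke Jacobian of Pi at g(z) + xi.\<close>
definition clarkeW :: "(nat \<Rightarrow> 'a \<Rightarrow> real) \<Rightarrow> nat \<Rightarrow> 'a \<Rightarrow> (nat \<Rightarrow> real) \<Rightarrow> (nat \<Rightarrow> real) \<Rightarrow> bool" where
  "clarkeW g s z \<xi> w \<longleftrightarrow>
     (\<forall>i<s. (g i z + \<xi> i < 0 \<longrightarrow> w i = 1) \<and> (g i z + \<xi> i > 0 \<longrightarrow> w i = 0) \<and>
            (g i z + \<xi> i = 0 \<longrightarrow> 0 \<le> w i \<and> w i \<le> 1))"

definition AW_system :: "('x::euclidean_space \<times> 'y::euclidean_space \<Rightarrow> real) \<Rightarrow> (nat \<Rightarrow> 'x \<times> 'y \<Rightarrow> real)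
    \<Rightarrow> (nat \<Rightarrow> 'x \<times> 'y \<Rightarrow> real) \<Rightarrow> nat \<Rightarrow> nat \<Rightarrow> 'x \<times> 'y \<Rightarrow> (nat \<Rightarrow> real) \<Rightarrow> (nat \<Rightarrow> real)
    \<Rightarrow> (nat \<Rightarrow> real) \<Rightarrow> 'x \<Rightarrow> 'y \<Rightarrow> (nat \<Rightarrow> real) \<Rightarrow> (nat \<Rightarrow> real) \<Rightarrow> bool" where
  "AW_system f h g r s z \<mu> \<xi> w dx dy d\<mu> d\<xi> \<longleftrightarrow>
     Hyy f h g r s \<mu> \<xi> z dy + (\<Sum>i<r. d\<mu> i *\<^sub>R grady (h i) z) + (\<Sum>i<s. d\<xi> i *\<^sub>R grady (g i) z)
        = Hyx f h g r s \<mu> \<xi> z dx \<and>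
     (\<forall>i<r. grady (h i) z \<bullet> dy = gradx (h i) z \<bullet> dx) \<and>
     (\<forall>i<s. (1 - w i) * (grady (g i) z \<bullet> dy) - w i * d\<xi> i = (1 - w i) * (gradx (g i) z \<bullet> dx))"

text \<open>[I_m 0 0] H(W) dx, i.e. the y-block of A(W)^{-1} B dx.\<close>
definition HWy :: "('x::euclidean_space \<times> 'y::euclidean_space \<Rightarrow> real) \<Rightarrow> (nat \<Rightarrow> 'x \<times> 'y \<Rightarrow> real)
    \<Rightarrow> (nat \<Rightarrow> 'x \<times> 'y \<Rightarrow> real) \<Rightarrow> nat \<Rightarrow> nat \<Rightarrow> 'x \<times> 'y \<Rightarrow> (nat \<Rightarrow> real) \<Rightarrow> (nat \<Rightarrow> real)
    \<Rightarrow> (nat \<Rightarrow> real) \<Rightarrow> 'x \<Rightarrow> 'y" where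
  "HWy f h g r s z \<mu> \<xi> w dx = (THE dy. \<exists>d\<mu> d\<xi>. AW_system f h g r s z \<mu> \<xi> w dx dy d\<mu> d\<xi>)"

definition GMFCQ_Omega1 :: "('x::euclidean_space \<times> 'y::euclidean_space \<Rightarrow> real) \<Rightarrow> (nat \<Rightarrow> 'x \<times> 'y \<Rightarrow> real)
    \<Rightarrow> (nat \<Rightarrow> 'x \<times> 'y \<Rightarrow> real) \<Rightarrow> (nat \<Rightarrow> 'x \<times> 'y \<Rightarrow> real) \<Rightarrow> (nat \<Rightarrow> 'x \<times> 'y \<Rightarrow> real)
    \<Rightarrow> nat \<Rightarrow> nat \<Rightarrow> nat \<Rightarrow> nat \<Rightarrow> 'x \<times> 'y \<Rightarrow> (nat \<Rightarrow> real) \<Rightarrow> (nat \<Rightarrow> real) \<Rightarrow> bool" where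
  "GMFCQ_Omega1 f h g H G r s p q z \<mu> \<xi> \<longleftrightarrow>
     (\<forall>w. clarkeW g s z \<xi> w \<longrightarrow>
        (\<forall>c. (\<forall>dx. (\<Sum>i<p. c i * (gradx (H i) z \<bullet> dx - grady (H i) z \<bullet> HWy f h g r s z \<mu> \<xi> w dx)) = 0)
             \<longrightarrow> (\<forall>i<p. c i = 0)) \<and>
        (\<exists>dx. (\<forall>i<p. gradx (H i) z \<bullet> dx - grady (H i) z \<bullet> HWy f h g r s z \<mu> \<xi> w dx = 0) \<and>
              (\<forall>i<q. G i z = 0 \<longrightarrow> gradx (G i) z \<bullet> dx - grady (G i) z \<bullet> HWy f h g r s z \<mu> \<xi> w dx < 0)))"

text \<open>Rows of the matrix A of the GMFCQ for Omega_2 applied to d = (dx, dy, dmu, dxi):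
  block 1 (i<p), block 2 (in 'y), block 3 (i<r), block 4 (i<s).\<close>
definition Arow1 :: "(nat \<Rightarrow> 'x::euclidean_space \<times> 'y::euclidean_space \<Rightarrow> real) \<Rightarrow> 'x \<times> 'y \<Rightarrow> nat \<Rightarrow> 'x \<Rightarrow> 'y \<Rightarrow> real" where
  "Arow1 H z i dx dy = gradx (H i) z \<bullet> dx + grady (H i) z \<bullet> dy"

definition Arow2 :: "('x::euclidean_space \<times> 'y::euclidean_space \<Rightarrow> real) \<Rightarrow> (nat \<Rightarrow> 'x \<times> 'y \<Rightarrow> real)
    \<Rightarrow> (nat \<Rightarrow> 'x \<times> 'y \<Rightarrow> real) \<Rightarrow> nat \<Rightarrow> nat \<Rightarrow> 'x \<times> 'y \<Rightarrow> (nat \<Rightarrow> real) \<Rightarrow> (nat \<Rightarrow> real)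
    \<Rightarrow> 'x \<Rightarrow> 'y \<Rightarrow> (nat \<Rightarrow> real) \<Rightarrow> (nat \<Rightarrow> real) \<Rightarrow> 'y" where
  "Arow2 f h g r s z \<mu> \<xi> dx dy d\<mu> d\<xi> =
     Hyx f h g r s \<mu> \<xi> z dx + Hyy f h g r s \<mu> \<xi> z dy
     + (\<Sum>i<r. d\<mu> i *\<^sub>R grady (h i) z) + (\<Sum>i<s. d\<xi> i *\<^sub>R grady (g i) z)"

definition Arow3 :: "(nat \<Rightarrow> 'x::euclidean_space \<times> 'y::euclidean_space \<Rightarrow> real) \<Rightarrow> 'x \<times> 'y \<Rightarrow> nat \<Rightarrow> 'x \<Rightarrow> 'y \<Rightarrow> real" where
  "Arow3 h z i dx dy = gradx (h i) z \<bullet> dx + grady (h i) z \<bullet> dy"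

definition Arow4 :: "(nat \<Rightarrow> 'x::euclidean_space \<times> 'y::euclidean_space \<Rightarrow> real) \<Rightarrow> 'x \<times> 'y \<Rightarrow> (nat \<Rightarrow> real)
    \<Rightarrow> nat \<Rightarrow> 'x \<Rightarrow> 'y \<Rightarrow> (nat \<Rightarrow> real) \<Rightarrow> real" where
  "Arow4 g z w i dx dy d\<xi> = (1 - w i) * (gradx (g i) z \<bullet> dx) + (1 - w i) * (grady (g i) z \<bullet> dy) - w i * d\<xi> i"

definition GMFCQ_Omega2 :: "('x::euclidean_space \<times> 'y::euclidean_space \<Rightarrow> real) \<Rightarrow> (nat \<Rightarrow> 'x \<times> 'y \<Rightarrow> real)
    \<Rightarrow> (nat \<Rightarrow> 'x \<times> 'y \<Rightarrow> real) \<Rightarrow> (nat \<Rightarrow> 'x \<times> 'y \<Rightarrow> real) \<Rightarrow> (nat \<Rightarrow> 'x \<times> 'y \<Rightarrow> real)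
    \<Rightarrow> nat \<Rightarrow> nat \<Rightarrow> nat \<Rightarrow> nat \<Rightarrow> 'x \<times> 'y \<Rightarrow> (nat \<Rightarrow> real) \<Rightarrow> (nat \<Rightarrow> real) \<Rightarrow> bool" where
  "GMFCQ_Omega2 f h g H G r s p q z \<mu> \<xi> \<longleftrightarrow>
     (\<forall>w. clarkeW g s z \<xi> w \<longrightarrow>
        (\<comment> \<open>full row rank: c^T A = 0 implies c = 0\<close>
         \<forall>c1 c2 c3 c4.
           (\<forall>dx dy d\<mu> d\<xi>.
              (\<Sum>i<p. c1 i * Arow1 H z i dx dy) + c2 \<bullet> Arow2 f h g r s z \<mu> \<xi> dx dy d\<mu> d\<xi>
              + (\<Sum>i<r. c3 i * Arow3 h z i dx dy) + (\<Sum>i<s. c4 i * Arow4 g z w i dx dy d\<xi>) = 0)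
           \<longrightarrow> (\<forall>i<p. c1 i = 0) \<and> c2 = 0 \<and> (\<forall>i<r. c3 i = 0) \<and> (\<forall>i<s. c4 i = 0)) \<and>
        (\<exists>dx dy d\<mu> d\<xi>.
           (\<forall>i<p. Arow1 H z i dx dy = 0) \<and> Arow2 f h g r s z \<mu> \<xi> dx dy d\<mu> d\<xi> = 0 \<and>
           (\<forall>i<r. Arow3 h z i dx dy = 0) \<and> (\<forall>i<s. Arow4 g z w i dx dy d\<xi> = 0) \<and>
           (\<forall>i<q. G i z = 0 \<longrightarrow> gradx (G i) z \<bullet> dx + grady (G i) z \<bullet> dy < 0)))"

end

theory Submission
  imports Defs "HOL-Library.Function_Algebras"
begin

(* Fix W = diag(w) in the Clarke Jacobian. SSOSC and LICQ make A(W) and its transpose injective: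
   pairing a kernel vector with its y-part makes the Hessian term nonpositive, so SSOSC forces the
   y-part to vanish, and LICQ then kills the multiplier parts. Hence both are invertible on
   R^m x R^r x R^s, and the kernel of the matrix of Omega_2 is the graph of dx |-> -A(W)^-1 B(W) dx.
   This turns Mangasarian-Fromovitz directions of either system into directions of the other, with
   dy = -H(W) dx. For the rank conditions: a row combination (c1, c) annihilating the matrix of
   Omega_2 has c1^T M = 0 (test it on that graph) and c^T A(W) = 0 (test it at dx = 0); conversely
   c1^T M = 0 extends to such a combination by solving A(W)^T c = (-J_yH^T c1, 0, 0). *)

section \<open>Smoothness\<close>

lemma C1_on_imp_continuous_on: "C1_on U \<phi> \<Longrightarrow> continuous_on U \<phi>"
  unfolding C1_on_def by (blast intro: continuous_at_imp_continuous_on has_derivative_continuous)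

lemma C3_on_imp_C2_on: "C3_on U \<phi> \<Longrightarrow> C2_on U \<phi>"
  unfolding C3_on_def C2_on_def
  by (metis C1_on_def C1_on_imp_continuous_on)

lemma C2_on_imp_differentiable_derivative:
  "C2_on U \<phi> \<Longrightarrow>
     \<exists>D. (\<forall>z\<in>U. (\<phi> has_derivative blinfun_apply (D z)) (at z)) \<and> (\<forall>z\<in>U. D differentiable at z)"
  unfolding C2_on_def C1_on_def differentiable_def by blast

lemma C2_on_family_differentiable_derivative:
  assumes "\<forall>i<n. C2_on U (\<phi> i)"
  obtains D where "\<And>i z. i < n \<Longrightarrow> z \<in> U \<Longrightarrow> (\<phi> i has_derivative blinfun_apply (D i z)) (at z)"
    and "\<And>i z. i < n \<Longrightarrow> z \<in> U \<Longrightarrow> D i differentiable at z"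
proof -
  have "\<forall>i. \<exists>D. i < n \<longrightarrow>
      (\<forall>z\<in>U. (\<phi> i has_derivative blinfun_apply (D z)) (at z)) \<and> (\<forall>z\<in>U. D differentiable at z)"
    using C2_on_imp_differentiable_derivative assms by blast
  then show ?thesis
    using that by metis
qed

lemma Lag_has_differentiable_derivative:
  assumes f: "C2_on U f" and h: "\<forall>i<r. C2_on U (h i)" and g: "\<forall>i<s. C2_on U (g i)"
  obtains D where "\<And>z. z \<in> U \<Longrightarrow> (Lag f h g r s \<mu> \<xi> has_derivative blinfun_apply (D z)) (at z)"
    and "\<And>z. z \<in> U \<Longrightarrow> D differentiable at z"
proof -
  obtain Df where Df: "\<forall>z\<in>U. (f has_derivative blinfun_apply (Df z)) (at z)"
      "\<forall>z\<in>U. Df differentiable at z"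
    using C2_on_imp_differentiable_derivative[OF f] by blast
  obtain Dh where Dh: "\<And>i z. i < r \<Longrightarrow> z \<in> U \<Longrightarrow> (h i has_derivative blinfun_apply (Dh i z)) (at z)"
      "\<And>i z. i < r \<Longrightarrow> z \<in> U \<Longrightarrow> Dh i differentiable at z"
    using C2_on_family_differentiable_derivative[OF h] by blast
  obtain Dg where Dg: "\<And>i z. i < s \<Longrightarrow> z \<in> U \<Longrightarrow> (g i has_derivative blinfun_apply (Dg i z)) (at z)"
      "\<And>i z. i < s \<Longrightarrow> z \<in> U \<Longrightarrow> Dg i differentiable at z"
    using C2_on_family_differentiable_derivative[OF g] by blast
  define D where "D z = Df z + (\<Sum>i<r. \<mu> i *\<^sub>R Dh i z) + (\<Sum>i<s. \<xi> i *\<^sub>R Dg i z)" for z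
  show ?thesis
  proof
    fix z assume z: "z \<in> U"
    have "((\<lambda>z. f z + (\<Sum>i<r. \<mu> i * h i z) + (\<Sum>i<s. \<xi> i * g i z)) has_derivative
        (\<lambda>v. Df z v + (\<Sum>i<r. \<mu> i * Dh i z v) + (\<Sum>i<s. \<xi> i * Dg i z v))) (at z)"
      using z Df Dh Dg by (intro has_derivative_add has_derivative_sum has_derivative_mult_right) auto
    then show "(Lag f h g r s \<mu> \<xi> has_derivative blinfun_apply (D z)) (at z)"
      by (simp add: Lag_def[abs_def] D_def blinfun.sum_left plus_blinfun.rep_eq scaleR_blinfun.rep_eq)
    show "D differentiable at z"
      unfolding D_def[abs_def] using z Df Dh Dg
      by (intro differentiable_add differentiable_sum differentiable_scaleR differentiable_const) auto
  qed
qed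

lemma grady_differentiable:
  assumes U: "open U" "z \<in> U"
    and D: "\<And>z. z \<in> U \<Longrightarrow> (\<phi> has_derivative blinfun_apply (D z)) (at z)" "D differentiable at z"
  shows "grady \<phi> differentiable at z"
proof -
  define F where "F z = (\<Sum>b\<in>Basis. blinfun_apply (D z) (0, b) *\<^sub>R b)" for z
  have "(\<lambda>z. blinfun_apply (D z) (0, b)) differentiable at z" for b
    using differentiable_chain_at[OF D(2) bounded_linear_imp_differentiable[OF bounded_linear_apply_blinfun]]
    by (simp add: o_def)
  then have "F differentiable at z"
    unfolding F_def[abs_def] by (intro differentiable_sum differentiable_scaleR differentiable_const) auto
  moreover have "F z = grady \<phi> z" if "z \<in> U" for z
    unfolding F_def grady_def using frechet_derivative_at[OF D(1)[OF that]] by simp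
  ultimately show ?thesis
    using U unfolding differentiable_def by (metis has_derivative_transform_within_open)
qed

lemma linear_partial_maps:
  assumes "linear F"
  shows "linear (\<lambda>y. F (0, y))" "linear (\<lambda>x. F (x, 0))"
  using linear_compose[OF _ assms, of "\<lambda>y. (0, y)"] linear_compose[OF _ assms, of "\<lambda>x. (x, 0)"]
  by (simp_all add: o_def linear_iff)

section \<open>Linear algebra of the KKT system\<close>

(* Multipliers in R^r and R^s are encoded as functions nat => real vanishing from index r
   resp. s on; this needs the pointwise vector space structure on functions. *)
instantiation "fun" :: (type, real_vector) real_vector
begin
definition scaleR_fun :: "real \<Rightarrow> ('a \<Rightarrow> 'b) \<Rightarrow> 'a \<Rightarrow> 'b" where
  "scaleR_fun c f = (\<lambda>x. c *\<^sub>R f x)"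
instance by standard (auto simp: scaleR_fun_def fun_eq_iff algebra_simps)
end

lemma scaleR_fun_apply [simp]: "(c *\<^sub>R f) x = c *\<^sub>R f x"
  by (simp add: scaleR_fun_def)

lemma sum_fun_apply [simp]: "sum f A x = (\<Sum>a\<in>A. f a x)"
  by (induction A rule: infinite_finite_induct) auto

lemma linear_inj_on_imp_surj_on:
  fixes T :: "'a::real_vector \<Rightarrow> 'a"
  assumes T: "linear T" and V: "subspace V" "finite B" "V \<subseteq> span B"
    and into: "T ` V \<subseteq> V" and inj: "inj_on T V"
  shows "T ` V = V"
proof -
  obtain C where C: "C \<subseteq> V" "independent C" "V \<subseteq> span C" "card C = dim V"
    by (rule basis_exists)
  have span_C: "span C = V"
    by (rule antisym[OF span_minimal[OF C(1) V(1)] C(3)])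
  have fin_C: "finite C"
    using independent_span_bound[OF V(2) C(2) order_trans[OF C(1) V(3)]] ..
  have indep_TC: "independent (T ` C)"
    using linear_independent_injective_image[OF T C(2)] inj unfolding span_C .
  have card_TC: "card (T ` C) = card C"
    by (rule card_image[OF inj_on_subset[OF inj C(1)]])
  have "V \<subseteq> span (T ` C)"
  proof
    fix v assume v: "v \<in> V"
    show "v \<in> span (T ` C)"
    proof (rule ccontr)
      assume v_out: "v \<notin> span (T ` C)"
      then have v_new: "v \<notin> T ` C"
        using span_base[of v "T ` C"] by blast
      have "T ` C \<subseteq> V"
        using image_mono[OF C(1)] into by (rule order_trans)
      then have "insert v (T ` C) \<subseteq> span C"
        using v unfolding span_C by blast
      then have "card (insert v (T ` C)) \<le> card C"
        using independent_span_bound[OF fin_C independent_insertI[OF v_out indep_TC]] by blast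
      then show False
        using card_TC fin_C v_new by simp
    qed
  qed
  also have "span (T ` C) = T ` V"
    unfolding span_linear_image[OF T] span_C ..
  finally show ?thesis
    using into by (rule antisym[rotated])
qed

lemma complementarity_row_nonneg:
  fixes a b w :: real
  assumes "0 \<le> w" "w \<le> 1" and row: "(1 - w) * a = w * b"
  shows "0 \<le> b * a"
proof (cases "w = 0")
  case True
  then show ?thesis using row by simp
next
  case False
  have "w * (b * a) = (1 - w) * a\<^sup>2"
    using row by (simp add: power2_eq_square mult.assoc[symmetric])
  then have "0 \<le> w * (b * a)"
    using assms(2) by simp
  then show ?thesis
    using assms(1) False by (simp add: zero_le_mult_iff)
qed

type_synonym 'y kkt_vec = "'y \<times> (nat \<Rightarrow> real) \<times> (nat \<Rightarrow> real)"

definition kkt_space :: "nat \<Rightarrow> nat \<Rightarrow> 'y::real_vector kkt_vec set" where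
  "kkt_space r s = {(dy, d\<mu>, d\<xi>). (\<forall>i\<ge>r. d\<mu> i = 0) \<and> (\<forall>i\<ge>s. d\<xi> i = 0)}"

definition kkt_inner :: "nat \<Rightarrow> nat \<Rightarrow> 'y::real_inner kkt_vec \<Rightarrow> 'y kkt_vec \<Rightarrow> real" where
  "kkt_inner r s = (\<lambda>(a, m, k) (b, n, l). a \<bullet> b + (\<Sum>i<r. m i * n i) + (\<Sum>i<s. k i * l i))"

lemma subspace_kkt_space: "subspace (kkt_space r s)"
  unfolding subspace_def kkt_space_def by (auto simp: zero_prod_def)

lemma kkt_space_eq_0:
  assumes "(dy, d\<mu>, d\<xi>) \<in> kkt_space r s" "dy = 0" "\<forall>i<r. d\<mu> i = 0" "\<forall>i<s. d\<xi> i = 0"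
  shows "(dy, d\<mu>, d\<xi>) = 0"
  using assms unfolding kkt_space_def by (auto simp: zero_prod_def fun_eq_iff) (metis not_le)+

lemma kkt_space_subset_span:
  "kkt_space r s \<subseteq> span ((\<lambda>b. (b, 0, 0)) ` Basis \<union> (\<lambda>i. (0, 0(i := 1), 0)) ` {..<r}
      \<union> (\<lambda>i. (0, 0, 0(i := 1))) ` {..<s} :: 'y::euclidean_space kkt_vec set)"
    (is "_ \<subseteq> span ?B")
proof
  fix v :: "'y kkt_vec"
  assume v: "v \<in> kkt_space r s"
  obtain dy d\<mu> d\<xi> where v_eq: "v = (dy, d\<mu>, d\<xi>)"
    by (cases v) auto
  have "v = (\<Sum>b\<in>Basis. (dy \<bullet> b) *\<^sub>R (b, 0, 0)) + (\<Sum>i<r. d\<mu> i *\<^sub>R (0, 0(i := 1), 0))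
      + (\<Sum>i<s. d\<xi> i *\<^sub>R (0, 0, 0(i := 1)))"
    using v unfolding v_eq kkt_space_def
    by (auto simp: prod_eq_iff fst_sum snd_sum euclidean_representation fun_eq_iff zero_fun_def
        if_distrib[where f="\<lambda>y. z * y" for z] not_less cong: if_cong)
  also have "\<dots> \<in> span ?B"
    by (intro span_add span_sum span_scale span_base) auto
  finally show "v \<in> span ?B" .
qed

lemma kkt_inner_add_right: "kkt_inner r s c (u + v) = kkt_inner r s c u + kkt_inner r s c v"
  by (cases c, cases u, cases v) (simp add: kkt_inner_def inner_add_right distrib_left sum.distrib)

lemma kkt_inner_zero_right [simp]: "kkt_inner r s c 0 = 0"
  by (cases c) (simp add: kkt_inner_def zero_prod_def)

lemma kkt_inner_Pair_zero_left [simp]: "kkt_inner r s (u, 0, 0) v = u \<bullet> fst v"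
  by (cases v) (simp add: kkt_inner_def)

lemma kkt_inner_self_eq_0:
  assumes "v \<in> kkt_space r s" "kkt_inner r s v v = 0"
  shows "v = 0"
proof -
  obtain dy d\<mu> d\<xi> where v: "v = (dy, d\<mu>, d\<xi>)"
    by (cases v) auto
  have "dy \<bullet> dy + (\<Sum>i<r. (d\<mu> i)\<^sup>2) + (\<Sum>i<s. (d\<xi> i)\<^sup>2) = 0"
    using assms(2) by (simp add: v kkt_inner_def power2_eq_square)
  then have "dy \<bullet> dy = 0" "(\<Sum>i<r. (d\<mu> i)\<^sup>2) = 0" "(\<Sum>i<s. (d\<xi> i)\<^sup>2) = 0"
    by (smt (verit) inner_ge_zero sum_nonneg zero_le_power2)+
  then show ?thesis
    using kkt_space_eq_0[OF assms(1)[unfolded v]] by (simp add: v sum_nonneg_eq_0_iff)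
qed

lemma linear_onto_kkt_space:
  fixes T :: "'y::euclidean_space kkt_vec \<Rightarrow> 'y kkt_vec"
  assumes T: "linear T" and into: "\<And>v. T v \<in> kkt_space r s"
    and kernel: "\<And>dy d\<mu> d\<xi>. T (dy, d\<mu>, d\<xi>) = 0 \<Longrightarrow> dy = 0 \<and> (\<forall>i<r. d\<mu> i = 0) \<and> (\<forall>i<s. d\<xi> i = 0)"
  shows "T ` kkt_space r s = kkt_space r s"
proof (rule linear_inj_on_imp_surj_on[OF T subspace_kkt_space _ kkt_space_subset_span])
  show "T ` kkt_space r s \<subseteq> kkt_space r s"
    using into by blast
  show "inj_on T (kkt_space r s)"
    unfolding linear_inj_on_iff_eq_0[OF T subspace_kkt_space]
    using kernel kkt_space_eq_0 by force
qed simp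

section \<open>The matrix A(W) of the lower-level KKT system\<close>

(* Q and P stand for the Hessian blocks of the Lagrangian in (y, y) and (y, x), hy, hx, gy, gx for
   the partial gradients of h_i and g_i, and gv for the values g_i at the KKT point. *)
locale lower_level_linearization =
  fixes Q :: "'y::euclidean_space \<Rightarrow> 'y" and P :: "'x::euclidean_space \<Rightarrow> 'y"
    and hy gy :: "nat \<Rightarrow> 'y" and hx gx :: "nat \<Rightarrow> 'x"
    and gv \<xi> :: "nat \<Rightarrow> real" and r s :: nat
  assumes linear_Q: "linear Q" and linear_P: "linear P"
    and complementarity: "\<And>i. i < s \<Longrightarrow> 0 \<le> \<xi> i \<and> gv i \<le> 0 \<and> \<xi> i * gv i = 0"
    and SSOSC: "\<And>dy. dy \<noteq> 0 \<Longrightarrow> (\<forall>i<r. hy i \<bullet> dy = 0) \<Longrightarrow>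
        (\<forall>i<s. gv i = 0 \<and> \<xi> i > 0 \<longrightarrow> gy i \<bullet> dy = 0) \<Longrightarrow> dy \<bullet> Q dy > 0"
    and LICQ: "\<And>a b. (\<Sum>i<r. a i *\<^sub>R hy i) + (\<Sum>i\<in>{i. i < s \<and> gv i = 0}. b i *\<^sub>R gy i) = 0 \<Longrightarrow>
        (\<forall>i<r. a i = 0) \<and> (\<forall>i<s. gv i = 0 \<longrightarrow> b i = 0)"
begin

definition clarke_jacobian :: "(nat \<Rightarrow> real) \<Rightarrow> bool" where
  "clarke_jacobian w \<longleftrightarrow> (\<forall>i<s. (gv i + \<xi> i < 0 \<longrightarrow> w i = 1) \<and> (gv i + \<xi> i > 0 \<longrightarrow> w i = 0) \<and>
            (gv i + \<xi> i = 0 \<longrightarrow> 0 \<le> w i \<and> w i \<le> 1))"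

lemma clarke_jacobian_bounds: "clarke_jacobian w \<Longrightarrow> i < s \<Longrightarrow> 0 \<le> w i \<and> w i \<le> 1"
  unfolding clarke_jacobian_def by (cases "gv i + \<xi> i" "0::real" rule: linorder_cases) auto

lemma clarke_jacobian_inactive: "clarke_jacobian w \<Longrightarrow> i < s \<Longrightarrow> gv i \<noteq> 0 \<Longrightarrow> w i = 1"
  using complementarity[of i] unfolding clarke_jacobian_def by force

lemma clarke_jacobian_strongly_active: "clarke_jacobian w \<Longrightarrow> i < s \<Longrightarrow> gv i = 0 \<Longrightarrow> \<xi> i > 0 \<Longrightarrow> w i = 0"
  unfolding clarke_jacobian_def by auto

definition AW :: "(nat \<Rightarrow> real) \<Rightarrow> 'y kkt_vec \<Rightarrow> 'y kkt_vec" where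
  "AW w = (\<lambda>(dy, d\<mu>, d\<xi>). (Q dy + (\<Sum>i<r. d\<mu> i *\<^sub>R hy i) + (\<Sum>i<s. d\<xi> i *\<^sub>R gy i),
      \<lambda>i. if i < r then hy i \<bullet> dy else 0,
      \<lambda>i. if i < s then (1 - w i) * (gy i \<bullet> dy) - w i * d\<xi> i else 0))"

(* The transpose of A(W); writing it with adjoint Q avoids proving that the Hessian is symmetric. *)
definition AW_adj :: "(nat \<Rightarrow> real) \<Rightarrow> 'y kkt_vec \<Rightarrow> 'y kkt_vec" where
  "AW_adj w = (\<lambda>(c, c\<mu>, c\<xi>). (adjoint Q c + (\<Sum>i<r. c\<mu> i *\<^sub>R hy i) + (\<Sum>i<s. c\<xi> i *\<^sub>R ((1 - w i) *\<^sub>R gy i)),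
      \<lambda>i. if i < r then hy i \<bullet> c else 0,
      \<lambda>i. if i < s then gy i \<bullet> c - w i * c\<xi> i else 0))"

definition BW :: "(nat \<Rightarrow> real) \<Rightarrow> 'x \<Rightarrow> 'y kkt_vec" where
  "BW w dx = (P dx, \<lambda>i. if i < r then hx i \<bullet> dx else 0,
      \<lambda>i. if i < s then (1 - w i) * (gx i \<bullet> dx) else 0)"

lemma linear_AW: "linear (AW w)"
  by (rule linearI; clarsimp simp: AW_def prod_eq_iff fun_eq_iff linear_add[OF linear_Q]
      linear_scale[OF linear_Q] sum.distrib scaleR_add_left scaleR_right.sum inner_add_right
      scaleR_add_right algebra_simps)

lemma linear_AW_adj: "linear (AW_adj w)"
proof (rule linearI)
  fix u v :: "'y kkt_vec"
  obtain a m k a' m' k' where uv: "u = (a, m, k)" "v = (a', m', k')"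
    by (cases u, cases v) auto
  show "AW_adj w (u + v) = AW_adj w u + AW_adj w v"
    by (simp add: uv AW_adj_def fun_eq_iff linear_add[OF adjoint_linear[OF linear_Q]]
        sum.distrib scaleR_add_left inner_add_right distrib_left add_ac del: scaleR_scaleR)
next
  fix c :: real and u :: "'y kkt_vec"
  obtain a m k where u: "u = (a, m, k)"
    by (cases u) auto
  show "AW_adj w (c *\<^sub>R u) = c *\<^sub>R AW_adj w u"
    by (simp add: u AW_adj_def fun_eq_iff linear_scale[OF adjoint_linear[OF linear_Q]]
        scaleR_right.sum scaleR_add_right right_diff_distrib mult.left_commute mult.assoc)
qed

lemma AW_in_kkt_space: "AW w v \<in> kkt_space r s"
  by (auto simp: AW_def kkt_space_def split: prod.split)

lemma AW_adj_in_kkt_space: "AW_adj w v \<in> kkt_space r s"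
  by (auto simp: AW_adj_def kkt_space_def split: prod.split)

lemma BW_0 [simp]: "BW w 0 = 0"
  by (simp add: BW_def linear_0[OF linear_P] zero_prod_def fun_eq_iff)

lemma kkt_inner_AW_adj: "kkt_inner r s (AW_adj w c) v = kkt_inner r s c (AW w v)"
proof -
  obtain c0 c\<mu> c\<xi> dy d\<mu> d\<xi> where cv: "c = (c0, c\<mu>, c\<xi>)" "v = (dy, d\<mu>, d\<xi>)"
    by (cases c, cases v) auto
  have "kkt_inner r s (AW_adj w c) v = c0 \<bullet> Q dy + (\<Sum>i<r. c\<mu> i * (hy i \<bullet> dy))
      + (\<Sum>i<s. c\<xi> i * ((1 - w i) * (gy i \<bullet> dy))) + (\<Sum>i<r. (hy i \<bullet> c0) * d\<mu> i)
      + (\<Sum>i<s. (gy i \<bullet> c0 - w i * c\<xi> i) * d\<xi> i)"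
    by (simp add: cv AW_adj_def kkt_inner_def inner_add_left inner_sum_left
        adjoint_clauses[OF linear_Q] mult.assoc)
  also have "\<dots> = kkt_inner r s c (AW w v)"
    by (simp add: cv AW_def kkt_inner_def inner_add_right inner_sum_right inner_commute
        algebra_simps sum.distrib sum_subtractf)
  finally show ?thesis .
qed

lemma SSOSC_clarke_jacobian:
  assumes w: "clarke_jacobian w" and h: "\<forall>i<r. hy i \<bullet> d = 0" and g: "\<forall>i<s. w i = 0 \<longrightarrow> gy i \<bullet> d = 0"
    and nonpos: "d \<bullet> Q d \<le> 0"
  shows "d = 0"
proof (rule ccontr)
  assume "d \<noteq> 0"
  moreover have "\<forall>i<s. gv i = 0 \<and> \<xi> i > 0 \<longrightarrow> gy i \<bullet> d = 0"
    using g clarke_jacobian_strongly_active[OF w] by blast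
  ultimately have "d \<bullet> Q d > 0"
    using SSOSC h by blast
  with nonpos show False
    by simp
qed

lemma LICQ_vanishing_inactive:
  assumes comb: "(\<Sum>i<r. a i *\<^sub>R hy i) + (\<Sum>i<s. b i *\<^sub>R gy i) = 0"
    and inactive: "\<forall>i<s. gv i \<noteq> 0 \<longrightarrow> b i = 0"
  shows "(\<forall>i<r. a i = 0) \<and> (\<forall>i<s. b i = 0)"
proof -
  have "(\<Sum>i<s. b i *\<^sub>R gy i) = (\<Sum>i\<in>{i. i < s \<and> gv i = 0}. b i *\<^sub>R gy i)"
    using inactive by (intro sum.mono_neutral_right) auto
  with comb have "(\<forall>i<r. a i = 0) \<and> (\<forall>i<s. gv i = 0 \<longrightarrow> b i = 0)"
    by (intro LICQ) simp
  with inactive show ?thesis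
    by blast
qed

lemma AW_eq_0_iff:
  "AW w (dy, d\<mu>, d\<xi>) = 0 \<longleftrightarrow>
     Q dy + (\<Sum>i<r. d\<mu> i *\<^sub>R hy i) + (\<Sum>i<s. d\<xi> i *\<^sub>R gy i) = 0 \<and> (\<forall>i<r. hy i \<bullet> dy = 0) \<and>
     (\<forall>i<s. (1 - w i) * (gy i \<bullet> dy) = w i * d\<xi> i)"
  by (auto simp: AW_def zero_prod_def fun_eq_iff)

lemma AW_adj_eq_0_iff:
  "AW_adj w (c, c\<mu>, c\<xi>) = 0 \<longleftrightarrow>
     adjoint Q c + (\<Sum>i<r. c\<mu> i *\<^sub>R hy i) + (\<Sum>i<s. c\<xi> i *\<^sub>R (1 - w i) *\<^sub>R gy i) = 0 \<and>
     (\<forall>i<r. hy i \<bullet> c = 0) \<and> (\<forall>i<s. gy i \<bullet> c = w i * c\<xi> i)"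
  by (auto simp: AW_adj_def zero_prod_def fun_eq_iff)

lemma AW_kernel:
  assumes w: "clarke_jacobian w" and "AW w (dy, d\<mu>, d\<xi>) = 0"
  shows "dy = 0 \<and> (\<forall>i<r. d\<mu> i = 0) \<and> (\<forall>i<s. d\<xi> i = 0)"
proof -
  have stat: "Q dy + (\<Sum>i<r. d\<mu> i *\<^sub>R hy i) + (\<Sum>i<s. d\<xi> i *\<^sub>R gy i) = 0"
    and h: "\<forall>i<r. hy i \<bullet> dy = 0" and g: "\<forall>i<s. (1 - w i) * (gy i \<bullet> dy) = w i * d\<xi> i"
    using assms(2) unfolding AW_eq_0_iff by auto
  have g_zero: "\<forall>i<s. w i = 0 \<longrightarrow> gy i \<bullet> dy = 0"
    using g by auto
  have "0 \<le> d\<xi> i * (gy i \<bullet> dy)" if "i < s" for i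
    using complementarity_row_nonneg clarke_jacobian_bounds[OF w that] g that by blast
  then have "0 \<le> (\<Sum>i<s. d\<xi> i * (gy i \<bullet> dy))"
    by (intro sum_nonneg) simp
  moreover have "dy \<bullet> Q dy + (\<Sum>i<s. d\<xi> i * (gy i \<bullet> dy)) = 0"
    using arg_cong[OF stat, of "inner dy"] h
    by (simp add: inner_add_right inner_sum_right inner_commute)
  ultimately have "dy \<bullet> Q dy \<le> 0"
    by linarith
  then have dy: "dy = 0"
    by (rule SSOSC_clarke_jacobian[OF w h g_zero])
  have "\<forall>i<s. gv i \<noteq> 0 \<longrightarrow> d\<xi> i = 0"
    using g clarke_jacobian_inactive[OF w] by (force simp: dy)
  with stat have "(\<forall>i<r. d\<mu> i = 0) \<and> (\<forall>i<s. d\<xi> i = 0)"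
    by (intro LICQ_vanishing_inactive) (simp_all add: dy linear_0[OF linear_Q])
  with dy show ?thesis by blast
qed

lemma AW_adj_kernel:
  assumes w: "clarke_jacobian w" and "AW_adj w (c, c\<mu>, c\<xi>) = 0"
  shows "c = 0 \<and> (\<forall>i<r. c\<mu> i = 0) \<and> (\<forall>i<s. c\<xi> i = 0)"
proof -
  have stat: "adjoint Q c + (\<Sum>i<r. c\<mu> i *\<^sub>R hy i) + (\<Sum>i<s. c\<xi> i *\<^sub>R (1 - w i) *\<^sub>R gy i) = 0"
    and h: "\<forall>i<r. hy i \<bullet> c = 0" and g: "\<forall>i<s. gy i \<bullet> c = w i * c\<xi> i"
    using assms(2) unfolding AW_adj_eq_0_iff by auto
  have "c \<bullet> Q c + (\<Sum>i<s. (1 - w i) * w i * (c\<xi> i)\<^sup>2) = 0"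
    using arg_cong[OF stat, of "inner c"] h g
    by (simp add: inner_add_right inner_sum_right inner_commute adjoint_clauses[OF linear_Q]
        power2_eq_square mult_ac)
  moreover have "0 \<le> (\<Sum>i<s. (1 - w i) * w i * (c\<xi> i)\<^sup>2)"
    using clarke_jacobian_bounds[OF w] by (intro sum_nonneg) simp
  ultimately have "c \<bullet> Q c \<le> 0"
    by linarith
  then have c: "c = 0"
    using SSOSC_clarke_jacobian[OF w h] g by simp
  have "(\<Sum>i<r. c\<mu> i *\<^sub>R hy i) + (\<Sum>i<s. (c\<xi> i * (1 - w i)) *\<^sub>R gy i) = 0"
    using stat by (simp add: c adjoint_linear[OF linear_Q, THEN linear_0])
  moreover have "\<forall>i<s. gv i \<noteq> 0 \<longrightarrow> c\<xi> i * (1 - w i) = 0"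
    using clarke_jacobian_inactive[OF w] by simp
  ultimately have "(\<forall>i<r. c\<mu> i = 0) \<and> (\<forall>i<s. c\<xi> i * (1 - w i) = 0)"
    by (rule LICQ_vanishing_inactive)
  then have c\<mu>: "\<forall>i<r. c\<mu> i = 0" and active: "\<forall>i<s. c\<xi> i * (1 - w i) = 0"
    by blast+
  have "c\<xi> i = 0" if i: "i < s" for i
  proof -
    have "c\<xi> i * (1 - w i) = 0" "w i * c\<xi> i = 0"
      using active g i by (simp_all add: c)
    then show ?thesis
      by auto
  qed
  with c c\<mu> show ?thesis
    by blast
qed

definition solves_AW :: "(nat \<Rightarrow> real) \<Rightarrow> 'x \<Rightarrow> 'y \<Rightarrow> (nat \<Rightarrow> real) \<Rightarrow> (nat \<Rightarrow> real) \<Rightarrow> bool" where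
  "solves_AW w dx dy d\<mu> d\<xi> \<longleftrightarrow>
     Q dy + (\<Sum>i<r. d\<mu> i *\<^sub>R hy i) + (\<Sum>i<s. d\<xi> i *\<^sub>R gy i) = P dx \<and>
     (\<forall>i<r. hy i \<bullet> dy = hx i \<bullet> dx) \<and>
     (\<forall>i<s. (1 - w i) * (gy i \<bullet> dy) - w i * d\<xi> i = (1 - w i) * (gx i \<bullet> dx))"

definition HW :: "(nat \<Rightarrow> real) \<Rightarrow> 'x \<Rightarrow> 'y" where
  "HW w dx = (THE dy. \<exists>d\<mu> d\<xi>. solves_AW w dx dy d\<mu> d\<xi>)"

lemma solves_AW_iff: "solves_AW w dx dy d\<mu> d\<xi> \<longleftrightarrow> AW w (dy, d\<mu>, d\<xi>) = BW w dx"
  by (auto simp: solves_AW_def AW_def BW_def fun_eq_iff)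

lemma solves_AW_iff_kernel:
  "solves_AW w dx dy d\<mu> d\<xi> \<longleftrightarrow> AW w (- dy, - d\<mu>, - d\<xi>) + BW w dx = 0"
proof -
  have "AW w (- dy, - d\<mu>, - d\<xi>) = - AW w (dy, d\<mu>, d\<xi>)"
    using linear_neg[OF linear_AW, of w "(dy, d\<mu>, d\<xi>)"] by simp
  then show ?thesis
    by (auto simp: solves_AW_iff)
qed

lemma AW_onto: "clarke_jacobian w \<Longrightarrow> AW w ` kkt_space r s = kkt_space r s"
  by (rule linear_onto_kkt_space[OF linear_AW AW_in_kkt_space AW_kernel])

lemma AW_adj_onto: "clarke_jacobian w \<Longrightarrow> AW_adj w ` kkt_space r s = kkt_space r s"
  by (rule linear_onto_kkt_space[OF linear_AW_adj AW_adj_in_kkt_space AW_adj_kernel])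

lemma solves_AW_unique:
  assumes w: "clarke_jacobian w" and "solves_AW w dx y1 m1 k1" "solves_AW w dx y2 m2 k2"
  shows "y1 = y2"
proof -
  have "AW w (y1 - y2, m1 - m2, k1 - k2) = 0"
    using linear_diff[OF linear_AW, of w "(y1, m1, k1)" "(y2, m2, k2)"] assms(2,3)
    by (simp add: solves_AW_iff)
  from AW_kernel[OF w this] show ?thesis
    by simp
qed

lemma HW_solves_AW:
  assumes w: "clarke_jacobian w"
  shows "\<exists>d\<mu> d\<xi>. solves_AW w dx (HW w dx) d\<mu> d\<xi>"
proof -
  have "BW w dx \<in> AW w ` kkt_space r s"
    unfolding AW_onto[OF w] by (simp add: BW_def kkt_space_def)
  then have "\<exists>dy d\<mu> d\<xi>. solves_AW w dx dy d\<mu> d\<xi>"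
    by (force simp: solves_AW_iff)
  then have "\<exists>!dy. \<exists>d\<mu> d\<xi>. solves_AW w dx dy d\<mu> d\<xi>"
    using solves_AW_unique[OF w] by blast
  then show ?thesis
    unfolding HW_def by (rule theI')
qed

lemma HW_eqI: "clarke_jacobian w \<Longrightarrow> solves_AW w dx dy d\<mu> d\<xi> \<Longrightarrow> HW w dx = dy"
  using HW_solves_AW solves_AW_unique by blast

end

section \<open>The two GMFCQs for a fixed W\<close>

locale bilevel_linearization = lower_level_linearization Q P hy gy hx gx gv \<xi> r s
  for Q :: "'y::euclidean_space \<Rightarrow> 'y" and P :: "'x::euclidean_space \<Rightarrow> 'y"
    and hy gy :: "nat \<Rightarrow> 'y" and hx gx :: "nat \<Rightarrow> 'x" and gv \<xi> :: "nat \<Rightarrow> real" and r s :: nat +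
  fixes Hy Gy :: "nat \<Rightarrow> 'y" and Hx Gx :: "nat \<Rightarrow> 'x" and Gv :: "nat \<Rightarrow> real" and p q :: nat
begin

(* The conditions of GMFCQ_Omega1 and GMFCQ_Omega2 for a single W, transcribed literally so that
   the main theorem unfolds to them; GMFCQ_Omega2_for_iff gives the usable form. *)
definition GMFCQ_Omega1_for :: "(nat \<Rightarrow> real) \<Rightarrow> bool" where
  "GMFCQ_Omega1_for w \<longleftrightarrow>
     (\<forall>c. (\<forall>dx. (\<Sum>i<p. c i * (Hx i \<bullet> dx - Hy i \<bullet> HW w dx)) = 0) \<longrightarrow> (\<forall>i<p. c i = 0)) \<and>
     (\<exists>dx. (\<forall>i<p. Hx i \<bullet> dx - Hy i \<bullet> HW w dx = 0) \<and>
        (\<forall>i<q. Gv i = 0 \<longrightarrow> Gx i \<bullet> dx - Gy i \<bullet> HW w dx < 0))"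

definition GMFCQ_Omega2_for :: "(nat \<Rightarrow> real) \<Rightarrow> bool" where
  "GMFCQ_Omega2_for w \<longleftrightarrow>
     (\<forall>c1 c2 c3 c4.
        (\<forall>dx dy d\<mu> d\<xi>.
           (\<Sum>i<p. c1 i * (Hx i \<bullet> dx + Hy i \<bullet> dy))
           + c2 \<bullet> (P dx + Q dy + (\<Sum>i<r. d\<mu> i *\<^sub>R hy i) + (\<Sum>i<s. d\<xi> i *\<^sub>R gy i))
           + (\<Sum>i<r. c3 i * (hx i \<bullet> dx + hy i \<bullet> dy))
           + (\<Sum>i<s. c4 i * ((1 - w i) * (gx i \<bullet> dx) + (1 - w i) * (gy i \<bullet> dy) - w i * d\<xi> i)) = 0)
        \<longrightarrow> (\<forall>i<p. c1 i = 0) \<and> c2 = 0 \<and> (\<forall>i<r. c3 i = 0) \<and> (\<forall>i<s. c4 i = 0)) \<and>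
     (\<exists>dx dy d\<mu> d\<xi>.
        (\<forall>i<p. Hx i \<bullet> dx + Hy i \<bullet> dy = 0) \<and>
        P dx + Q dy + (\<Sum>i<r. d\<mu> i *\<^sub>R hy i) + (\<Sum>i<s. d\<xi> i *\<^sub>R gy i) = 0 \<and>
        (\<forall>i<r. hx i \<bullet> dx + hy i \<bullet> dy = 0) \<and>
        (\<forall>i<s. (1 - w i) * (gx i \<bullet> dx) + (1 - w i) * (gy i \<bullet> dy) - w i * d\<xi> i = 0) \<and>
        (\<forall>i<q. Gv i = 0 \<longrightarrow> Gx i \<bullet> dx + Gy i \<bullet> dy < 0))"

lemma Omega2_row_combination_eq:
  "c2 \<bullet> (P dx + Q dy + (\<Sum>i<r. d\<mu> i *\<^sub>R hy i) + (\<Sum>i<s. d\<xi> i *\<^sub>R gy i))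
     + (\<Sum>i<r. c3 i * (hx i \<bullet> dx + hy i \<bullet> dy))
     + (\<Sum>i<s. c4 i * ((1 - w i) * (gx i \<bullet> dx) + (1 - w i) * (gy i \<bullet> dy) - w i * d\<xi> i))
   = kkt_inner r s (c2, c3, c4) (AW w (dy, d\<mu>, d\<xi>) + BW w dx)"
  by (simp add: kkt_inner_def AW_def BW_def inner_add_right sum.distrib[symmetric]
      algebra_simps)

lemma Omega2_rows_eq_0_iff:
  "(P dx + Q dy + (\<Sum>i<r. d\<mu> i *\<^sub>R hy i) + (\<Sum>i<s. d\<xi> i *\<^sub>R gy i) = 0 \<and>
    (\<forall>i<r. hx i \<bullet> dx + hy i \<bullet> dy = 0) \<and>
    (\<forall>i<s. (1 - w i) * (gx i \<bullet> dx) + (1 - w i) * (gy i \<bullet> dy) - w i * d\<xi> i = 0))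
   \<longleftrightarrow> AW w (dy, d\<mu>, d\<xi>) + BW w dx = 0"
  by (auto simp: AW_def BW_def zero_prod_def fun_eq_iff algebra_simps)

lemma GMFCQ_Omega2_for_iff:
  "GMFCQ_Omega2_for w \<longleftrightarrow>
     (\<forall>c1 c2 c3 c4.
        (\<forall>dx dy d\<mu> d\<xi>. (\<Sum>i<p. c1 i * (Hx i \<bullet> dx + Hy i \<bullet> dy))
           + kkt_inner r s (c2, c3, c4) (AW w (dy, d\<mu>, d\<xi>) + BW w dx) = 0)
        \<longrightarrow> (\<forall>i<p. c1 i = 0) \<and> c2 = 0 \<and> (\<forall>i<r. c3 i = 0) \<and> (\<forall>i<s. c4 i = 0)) \<and>
     (\<exists>dx dy d\<mu> d\<xi>. (\<forall>i<p. Hx i \<bullet> dx + Hy i \<bullet> dy = 0) \<and>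
        AW w (dy, d\<mu>, d\<xi>) + BW w dx = 0 \<and> (\<forall>i<q. Gv i = 0 \<longrightarrow> Gx i \<bullet> dx + Gy i \<bullet> dy < 0))"
  unfolding GMFCQ_Omega2_for_def Omega2_row_combination_eq[symmetric] Omega2_rows_eq_0_iff[symmetric]
  by (simp only: conj_assoc add.assoc)

lemma GMFCQ_Omega1_for_imp_Omega2_for:
  assumes w: "clarke_jacobian w" and Omega1: "GMFCQ_Omega1_for w"
  shows "GMFCQ_Omega2_for w"
  unfolding GMFCQ_Omega2_for_iff
proof (rule conjI; (intro allI impI)?)
  fix c1 c2 c3 c4
  assume comb: "\<forall>dx dy d\<mu> d\<xi>. (\<Sum>i<p. c1 i * (Hx i \<bullet> dx + Hy i \<bullet> dy))
      + kkt_inner r s (c2, c3, c4) (AW w (dy, d\<mu>, d\<xi>) + BW w dx) = 0"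
  have "(\<Sum>i<p. c1 i * (Hx i \<bullet> dx - Hy i \<bullet> HW w dx)) = 0" for dx
  proof -
    obtain d\<mu> d\<xi> where "solves_AW w dx (HW w dx) d\<mu> d\<xi>"
      using HW_solves_AW[OF w] by blast
    then show ?thesis
      using comb[rule_format, of dx "- HW w dx" "- d\<mu>" "- d\<xi>"]
      by (simp add: solves_AW_iff_kernel)
  qed
  then have c1: "\<forall>i<p. c1 i = 0"
    using Omega1 unfolding GMFCQ_Omega1_for_def by blast
  have "kkt_inner r s (AW_adj w (c2, c3, c4)) v = 0" for v
    using comb[rule_format, of 0 "fst v" "fst (snd v)" "snd (snd v)"] c1
    by (simp add: kkt_inner_AW_adj)
  then have "AW_adj w (c2, c3, c4) = 0"
    using kkt_inner_self_eq_0[OF AW_adj_in_kkt_space] by blast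
  with c1 show "(\<forall>i<p. c1 i = 0) \<and> c2 = 0 \<and> (\<forall>i<r. c3 i = 0) \<and> (\<forall>i<s. c4 i = 0)"
    using AW_adj_kernel[OF w] by blast
next
  obtain dx where
    M: "\<forall>i<p. Hx i \<bullet> dx - Hy i \<bullet> HW w dx = 0" and
    G: "\<forall>i<q. Gv i = 0 \<longrightarrow> Gx i \<bullet> dx - Gy i \<bullet> HW w dx < 0"
    using Omega1 unfolding GMFCQ_Omega1_for_def by blast
  obtain d\<mu> d\<xi> where "solves_AW w dx (HW w dx) d\<mu> d\<xi>"
    using HW_solves_AW[OF w] by blast
  with M G show "\<exists>dx dy d\<mu> d\<xi>. (\<forall>i<p. Hx i \<bullet> dx + Hy i \<bullet> dy = 0) \<and>
      AW w (dy, d\<mu>, d\<xi>) + BW w dx = 0 \<and> (\<forall>i<q. Gv i = 0 \<longrightarrow> Gx i \<bullet> dx + Gy i \<bullet> dy < 0)"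
    by (intro exI[of _ dx] exI[of _ "- HW w dx"] exI[of _ "- d\<mu>"] exI[of _ "- d\<xi>"])
      (simp add: solves_AW_iff_kernel)
qed

lemma GMFCQ_Omega2_for_imp_Omega1_for:
  assumes w: "clarke_jacobian w" and Omega2: "GMFCQ_Omega2_for w"
  shows "GMFCQ_Omega1_for w"
  unfolding GMFCQ_Omega1_for_def
proof (rule conjI; (intro allI impI)?)
  fix c j
  assume M: "\<forall>dx. (\<Sum>i<p. c i * (Hx i \<bullet> dx - Hy i \<bullet> HW w dx)) = 0" and j: "j < p"
  define u where "u = - (\<Sum>i<p. c i *\<^sub>R Hy i)"
  have "(u, 0, 0) \<in> AW_adj w ` kkt_space r s"
    unfolding AW_adj_onto[OF w] by (simp add: kkt_space_def)
  then obtain c2 c3 c4 where adj: "AW_adj w (c2, c3, c4) = (u, 0, 0)"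
    by (metis imageE prod_cases3)
  have "(\<Sum>i<p. c i * (Hx i \<bullet> dx + Hy i \<bullet> dy))
      + kkt_inner r s (c2, c3, c4) (AW w (dy, d\<mu>, d\<xi>) + BW w dx) = 0" for dx dy d\<mu> d\<xi>
  proof -
    obtain d\<mu>' d\<xi>' where "solves_AW w dx (HW w dx) d\<mu>' d\<xi>'"
      using HW_solves_AW[OF w] by blast
    then have "BW w dx = AW w (HW w dx, d\<mu>', d\<xi>')"
      by (simp add: solves_AW_iff)
    then have "kkt_inner r s (c2, c3, c4) (AW w (dy, d\<mu>, d\<xi>) + BW w dx)
        = u \<bullet> dy + u \<bullet> HW w dx"
      by (simp add: kkt_inner_add_right kkt_inner_AW_adj[symmetric] adj)
    also have "\<dots> = - (\<Sum>i<p. c i * (Hy i \<bullet> dy)) - (\<Sum>i<p. c i * (Hy i \<bullet> HW w dx))"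
      by (simp add: u_def inner_sum_left)
    finally show ?thesis
      using M[rule_format, of dx]
      by (simp add: algebra_simps sum.distrib sum_subtractf)
  qed
  then show "c j = 0"
    using Omega2 j unfolding GMFCQ_Omega2_for_iff by blast
next
  obtain dx dy d\<mu> d\<xi> where
    H: "\<forall>i<p. Hx i \<bullet> dx + Hy i \<bullet> dy = 0" and
    kernel: "AW w (dy, d\<mu>, d\<xi>) + BW w dx = 0" and
    G: "\<forall>i<q. Gv i = 0 \<longrightarrow> Gx i \<bullet> dx + Gy i \<bullet> dy < 0"
    using Omega2 unfolding GMFCQ_Omega2_for_iff by blast
  have "HW w dx = - dy"
    using kernel by (intro HW_eqI[OF w, of _ _ "- d\<mu>" "- d\<xi>"]) (simp add: solves_AW_iff_kernel)
  with H G show "\<exists>dx. (\<forall>i<p. Hx i \<bullet> dx - Hy i \<bullet> HW w dx = 0) \<and>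
      (\<forall>i<q. Gv i = 0 \<longrightarrow> Gx i \<bullet> dx - Gy i \<bullet> HW w dx < 0)"
    by (intro exI[of _ dx]) simp
qed

lemma GMFCQ_Omega1_for_iff_Omega2_for:
  "clarke_jacobian w \<Longrightarrow> GMFCQ_Omega1_for w \<longleftrightarrow> GMFCQ_Omega2_for w"
  using GMFCQ_Omega1_for_imp_Omega2_for GMFCQ_Omega2_for_imp_Omega1_for by blast

end

lemma linear_Hessian_blocks:
  assumes U: "open U" "z \<in> U"
    and f: "C2_on U f" and h: "\<forall>i<r. C2_on U (h i)" and g: "\<forall>i<s. C2_on U (g i)"
  shows "linear (Hyy f h g r s \<mu> \<xi> z)" "linear (Hyx f h g r s \<mu> \<xi> z)"
proof -
  obtain D where D: "\<And>z. z \<in> U \<Longrightarrow> (Lag f h g r s \<mu> \<xi> has_derivative blinfun_apply (D z)) (at z)"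
      "\<And>z. z \<in> U \<Longrightarrow> D differentiable at z"
    using Lag_has_differentiable_derivative[OF f h g] by blast
  have "linear (frechet_derivative (grady (Lag f h g r s \<mu> \<xi>)) (at z))"
    by (rule linear_frechet_derivative[OF grady_differentiable[OF U D(1) D(2)[OF U(2)]]])
  then show "linear (Hyy f h g r s \<mu> \<xi> z)" "linear (Hyx f h g r s \<mu> \<xi> z)"
    unfolding Hyy_def[abs_def] Hyx_def[abs_def] by (rule linear_partial_maps)+
qed

lemma lower_level_linearization_at_KKT:
  assumes "linear (Hyy f h g r s \<mu> \<xi> z)" "linear (Hyx f h g r s \<mu> \<xi> z)"
    and KKT: "lower_KKT f h g r s z \<mu> \<xi>" and A2: "SSOSC f h g r s z" and A4: "LICQ h g r s z"
  shows "lower_level_linearization (Hyy f h g r s \<mu> \<xi> z) (Hyx f h g r s \<mu> \<xi> z)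
    (\<lambda>i. grady (h i) z) (\<lambda>i. grady (g i) z) (\<lambda>i. g i z) \<xi> r s"
proof (rule lower_level_linearization.intro[OF assms(1,2)])
  show "\<And>i. i < s \<Longrightarrow> 0 \<le> \<xi> i \<and> g i z \<le> 0 \<and> \<xi> i * g i z = 0"
    using KKT unfolding lower_KKT_def by blast
  show "\<And>dy. dy \<noteq> 0 \<Longrightarrow> \<forall>i<r. grady (h i) z \<bullet> dy = 0 \<Longrightarrow>
      \<forall>i<s. g i z = 0 \<and> 0 < \<xi> i \<longrightarrow> grady (g i) z \<bullet> dy = 0 \<Longrightarrow> 0 < dy \<bullet> Hyy f h g r s \<mu> \<xi> z dy"
    using A2 KKT unfolding SSOSC_def by blast
  show "\<And>a b. (\<Sum>i<r. a i *\<^sub>R grady (h i) z) + (\<Sum>i\<in>{i. i < s \<and> g i z = 0}. b i *\<^sub>R grady (g i) z) = 0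
      \<Longrightarrow> (\<forall>i<r. a i = 0) \<and> (\<forall>i<s. g i z = 0 \<longrightarrow> b i = 0)"
    using A4 unfolding LICQ_def by blast
qed

theorem proposition4p1:
  fixes f :: "'x::euclidean_space \<times> 'y::euclidean_space \<Rightarrow> real"
    and h g H G :: "nat \<Rightarrow> 'x \<times> 'y \<Rightarrow> real"
    and r s p q :: nat
    and xs :: 'x and ys :: 'y
    and \<mu>s \<xi>s :: "nat \<Rightarrow> real"
    and U :: "('x \<times> 'y) set"
  assumes U: "open U" "(xs, ys) \<in> U"
    and smooth_f: "C3_on U f"
    and smooth_h: "\<forall>i<r. C3_on U (h i)"
    and smooth_g: "\<forall>i<s. C3_on U (g i)"
    and smooth_H: "\<forall>i<p. C2_on U (H i)"
    and smooth_G: "\<forall>i<q. C2_on U (G i)"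
    and KKT: "lower_KKT f h g r s (xs, ys) \<mu>s \<xi>s"
    and A2: "SSOSC f h g r s (xs, ys)"
    and A4: "LICQ h g r s (xs, ys)"
  shows "GMFCQ_Omega1 f h g H G r s p q (xs, ys) \<mu>s \<xi>s
     \<longleftrightarrow> GMFCQ_Omega2 f h g H G r s p q (xs, ys) \<mu>s \<xi>s"
proof -
  let ?z = "(xs, ys)"
  have "\<forall>i<r. C2_on U (h i)" "\<forall>i<s. C2_on U (g i)"
    using smooth_h smooth_g C3_on_imp_C2_on by blast+
  note linear = linear_Hessian_blocks[OF U C3_on_imp_C2_on[OF smooth_f] this]
  interpret bilevel_linearization "Hyy f h g r s \<mu>s \<xi>s ?z" "Hyx f h g r s \<mu>s \<xi>s ?z"
    "\<lambda>i. grady (h i) ?z" "\<lambda>i. grady (g i) ?z" "\<lambda>i. gradx (h i) ?z" "\<lambda>i. gradx (g i) ?z"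
    "\<lambda>i. g i ?z" \<xi>s r s "\<lambda>i. grady (H i) ?z" "\<lambda>i. grady (G i) ?z"
    "\<lambda>i. gradx (H i) ?z" "\<lambda>i. gradx (G i) ?z" "\<lambda>i. G i ?z" p q
    by (intro bilevel_linearization.intro lower_level_linearization_at_KKT linear KKT A2 A4)
  have "GMFCQ_Omega1 f h g H G r s p q ?z \<mu>s \<xi>s \<longleftrightarrow>
      (\<forall>w. clarke_jacobian w \<longrightarrow> GMFCQ_Omega1_for w)"
    unfolding GMFCQ_Omega1_def clarkeW_def clarke_jacobian_def GMFCQ_Omega1_for_def
      HWy_def HW_def AW_system_def solves_AW_def
    by (rule refl)
  moreover have "GMFCQ_Omega2 f h g H G r s p q ?z \<mu>s \<xi>s \<longleftrightarrow>
      (\<forall>w. clarke_jacobian w \<longrightarrow> GMFCQ_Omega2_for w)"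
    unfolding GMFCQ_Omega2_def clarkeW_def clarke_jacobian_def GMFCQ_Omega2_for_def
      Arow1_def Arow2_def Arow3_def Arow4_def
    by (rule refl)
  ultimately show ?thesis
    using GMFCQ_Omega1_for_iff_Omega2_for by blast
qed

end
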